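(* Let $W=W(v_0;v_1,\dots,v_k)\subseteq K_n$ be a $k$-wheel with vertex set $V=V(W)\subseteq[1,n]$, and let $LT(W)$ be its leading tree. Then: (i) if $v_0=\min V$, then $\operatorname{val}_{LT(W)}(v_0)=k-1$; (ii) if $v_0=\max V$, then $\operatorname{val}_{LT(W)}(v_0)=1$; (iii) if $v_0\notin\{\min V,\max V\}$, then for all $i\in[1,k]$, $\operatorname{val}_{LT(W)}(v_i)=1$ if $v_i>v_0$ and $\operatorname{val}_{LT(W)}(v_i)=2$ if $v_i<v_0$. In this case, if $v_0$ is the $r$-th largest element of $V$ (so $r\in[2,k]$), then $\operatorname{val}_{LT(W)}(v_0)=r-1$.
   Context: For $k\ge 3$ and distinct vertices $v_0,\dots,v_k\in[1,n]$, the $k$-wheel $W(v_0;v_1,\dots,v_k)$ has radii $v_0v_i$ and chords $v_iv_{i+1}$ ($1\le i\le k$, $v_{k+1}=v_1$). A coupled tree of $W$ is a spanning tree $T\subseteq E(W)$ of $V(W)$ whose complement $E(W)\setminus T$ is also a spanning tree. Order the edges of $K_n$ totally by $12\succ13\succ\dots\succ1n\succ23\succ24\succ\dots\succ n{-}1\,n$ (for $a<b$, $c<d$: $ab\succ cd$ iff $a<c$, or $a=c$ and $b<d$). Extend to edge sets: $E\succ F$ iff $|E|>|F|$, or $|E|=|F|$ and the $\succ$-largest element of the symmetric difference $E\triangle F$ lies in $E$ (this is graded lexicographic order on the monomials $m_E$ with $m_{12}>m_{13}>\dots$). The leading tree $LT(W)$ is the $\succ$-largest coupled tree of $W$ (equivalently,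 the tree whose monomial is the leading term of the wheel's tree polynomial). $\operatorname{val}_T(v)$ is the number of edges of $T$ at $v$. *)

theory Defs
  imports Main
begin

text \<open>Edges of K_n are two-element sets of vertices (natural numbers).\<close>

definition wheel_vertices :: "nat \<Rightarrow> nat list \<Rightarrow> nat set" where
  "wheel_vertices v0 vs = set (v0 # vs)"

text \<open>Wheel W(v0; v1..vk) with vs = [v1,...,vk]: radii v0 vi and chords vi v(i+1), v(k+1) = v1.\<close>
definition wheel_edges :: "nat \<Rightarrow> nat list \<Rightarrow> nat set set" where
  "wheel_edges v0 vs =
     {{v0, vs ! i} | i. i < length vs} \<union>
     {{vs ! i, vs ! ((i + 1) mod length vs)} | i. i < length vs}"

definition is_wheel :: "nat \<Rightarrow> nat \<Rightarrow> nat list \<Rightarrow> bool" where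
  "is_wheel n v0 vs \<longleftrightarrow> length vs \<ge> 3 \<and> distinct (v0 # vs) \<and> set (v0 # vs) \<subseteq> {1..n}"

definition edge_rel :: "nat set set \<Rightarrow> (nat \<times> nat) set" where
  "edge_rel T = {(a, b). {a, b} \<in> T}"

text \<open>A spanning tree of V: edges inside V, connected on V, and acyclic (every edge is a bridge).\<close>
definition spanning_tree :: "nat set \<Rightarrow> nat set set \<Rightarrow> bool" where
  "spanning_tree V T \<longleftrightarrow>
     (\<forall>e\<in>T. e \<subseteq> V \<and> card e = 2) \<and>
     (\<forall>u\<in>V. \<forall>w\<in>V. (u, w) \<in> (edge_rel T)\<^sup>*) \<and>
     (\<forall>e\<in>T. \<forall>a b. e = {a, b} \<longrightarrow> (a, b) \<notin> (edge_rel (T - {e}))\<^sup>*)"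

definition coupled_tree :: "nat \<Rightarrow> nat list \<Rightarrow> nat set set \<Rightarrow> bool" where
  "coupled_tree v0 vs T \<longleftrightarrow>
     T \<subseteq> wheel_edges v0 vs \<and>
     spanning_tree (wheel_vertices v0 vs) T \<and>
     spanning_tree (wheel_vertices v0 vs) (wheel_edges v0 vs - T)"

definition edge_gt :: "nat set \<Rightarrow> nat set \<Rightarrow> bool" where
  "edge_gt e f \<longleftrightarrow> Min e < Min f \<or> (Min e = Min f \<and> Max e < Max f)"

definition set_gt :: "nat set set \<Rightarrow> nat set set \<Rightarrow> bool" where
  "set_gt E F \<longleftrightarrow> card E > card F \<or>
     (card E = card F \<and>
      (\<exists>x \<in> E - F. \<forall>y \<in> (E - F) \<union> (F - E). y \<noteq> x \<longrightarrow> edge_gt x y))"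

definition leading_tree :: "nat \<Rightarrow> nat list \<Rightarrow> nat set set" where
  "leading_tree v0 vs = (THE T. coupled_tree v0 vs T \<and>
      (\<forall>T'. coupled_tree v0 vs T' \<and> T' \<noteq> T \<longrightarrow> set_gt T T'))"

definition val :: "nat set set \<Rightarrow> nat \<Rightarrow> nat" where
  "val T v = card {e \<in> T. v \<in> e}"

end

theory Submission
  imports Defs
begin

(* Orient the rim cyclically by a map \<sigma> (successor or predecessor). A coupled tree is the
   same thing as a choice, for every rim vertex v_j, of a parent: either the hub (the spoke v0 v_j)
   or v_(\<sigma> j) (a rim edge), where both kinds of choice must occur; the complementary tree makes
   the opposite choices. That every coupled tree has this form only uses that the tree and its
   complement are connected: a run of rim vertices whose spokes and two boundary rim edges all
   avoid one of the two graphs would be cut off in it.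

   Trees with the same orientation differ in finitely many choices, and since the spoke
   {v0, v_j} and the rim edge {v_j, v_(\<sigma> j)} share v_j, switching the choice of v_j to the spoke
   increases the tree iff v0 < v_(\<sigma> j). So in the leading tree v_j takes its spoke exactly
   when v0 < v_(\<sigma> j), except that the choices may not become constant: if v0 is the minimum
   all but one vertex take the spoke, if it is the maximum exactly one does. The hub then meets
   one edge per spoke taken, and v_i meets its own chosen edge plus the rim edge of its
   \<sigma>-predecessor when that vertex did not take its spoke. *)

lemma card_2_eq_Min_Max: "card (e::nat set) = 2 \<Longrightarrow> e = {Min e, Max e}"
  by (auto simp: card_2_iff)

lemma edge_gt_trans: "edge_gt a b \<Longrightarrow> edge_gt b c \<Longrightarrow> edge_gt a c"
  unfolding edge_gt_def by auto

lemma edge_gt_asym: "edge_gt a b \<Longrightarrow> \<not> edge_gt b a"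
  unfolding edge_gt_def by auto

lemma edge_gt_total: "card a = 2 \<Longrightarrow> card b = 2 \<Longrightarrow> a \<noteq> b \<Longrightarrow> edge_gt a b \<or> edge_gt b a"
  unfolding edge_gt_def by (metis card_2_eq_Min_Max linorder_neqE_nat)

lemma edge_gt_spoke_rim_iff:
  fixes h x y :: nat
  assumes "distinct [h, x, y]"
  shows "edge_gt {h, x} {x, y} \<longleftrightarrow> h < y"
  using assms unfolding edge_gt_def by (cases "h < x"; cases "x < y"; cases "h < y") auto

lemma edge_gt_rim_spoke_iff:
  fixes h x y :: nat
  assumes "distinct [h, x, y]"
  shows "edge_gt {x, y} {h, x} \<longleftrightarrow> y < h"
  using assms unfolding edge_gt_def by (cases "h < x"; cases "x < y"; cases "h < y") auto

lemma ex_edge_gt_greatest: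
  assumes "finite X" "X \<noteq> {}" "\<forall>e\<in>X. card e = 2"
  shows "\<exists>m\<in>X. \<forall>y\<in>X. y \<noteq> m \<longrightarrow> edge_gt m y"
  using assms
proof (induction X rule: finite_ne_induct)
  case (insert x F)
  then obtain m where m: "m \<in> F" "\<forall>y\<in>F. y \<noteq> m \<longrightarrow> edge_gt m y" by auto
  show ?case
  proof (cases "edge_gt x m")
    case True
    then show ?thesis using m by (metis edge_gt_trans insert_iff)
  next
    case False
    then have "edge_gt m x" using edge_gt_total[of x m] insert m by auto
    then show ?thesis using m by auto
  qed
qed simp

lemma set_gt_asym: "set_gt E F \<Longrightarrow> \<not> set_gt F E"
  unfolding set_gt_def by (metis DiffD1 DiffD2 Un_iff edge_gt_asym less_not_sym)

lemma set_gt_trans: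
  assumes "set_gt E F" "set_gt F G" "\<forall>e\<in>E \<union> F \<union> G. card e = 2"
  shows "set_gt E G"
proof (cases "card E = card F \<and> card F = card G")
  case False
  then show ?thesis using assms unfolding set_gt_def by auto
next
  case True
  from assms(1) True obtain x
    where x: "x \<in> E - F" "\<forall>z \<in> (E - F) \<union> (F - E). z \<noteq> x \<longrightarrow> edge_gt x z"
    unfolding set_gt_def by auto
  from assms(2) True obtain y
    where y: "y \<in> F - G" "\<forall>z \<in> (F - G) \<union> (G - F). z \<noteq> y \<longrightarrow> edge_gt y z"
    unfolding set_gt_def by auto
  have "x \<noteq> y" using x y by auto
  then consider "edge_gt x y" | "edge_gt y x" using edge_gt_total assms(3) x y by blast
  then show ?thesis
  proof cases
    case 1
    then have "x \<notin> G" using x y \<open>x \<noteq> y\<close> edge_gt_asym by blast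
    moreover have "edge_gt x z" if "z \<in> (E - G) \<union> (G - E)" "z \<noteq> x" for z
    proof (cases "z \<in> (E - F) \<union> (F - E)")
      case False
      then have "z \<in> (F - G) \<union> (G - F)" using that by blast
      then show ?thesis using y 1 edge_gt_trans by metis
    qed (use that x in blast)
    ultimately show ?thesis using True x unfolding set_gt_def by auto
  next
    case 2
    then have "y \<in> E" using x y \<open>x \<noteq> y\<close> edge_gt_asym by blast
    moreover have "edge_gt y z" if "z \<in> (E - G) \<union> (G - E)" "z \<noteq> y" for z
    proof (cases "z \<in> (F - G) \<union> (G - F)")
      case False
      then have "z \<in> (E - F) \<union> (F - E)" using that by blast
      then show ?thesis using x 2 edge_gt_trans by metis
    qed (use that y in blast)
    ultimately show ?thesis using True y unfolding set_gt_def by auto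
  qed
qed

lemma set_gt_total:
  assumes "finite E" "finite F" "E \<noteq> F" "\<forall>e\<in>E \<union> F. card e = 2"
  shows "set_gt E F \<or> set_gt F E"
proof (cases "card E = card F")
  case True
  let ?D = "(E - F) \<union> (F - E)"
  have "finite ?D" "?D \<noteq> {}" "\<forall>e\<in>?D. card e = 2" using assms by auto
  then obtain m where "m \<in> ?D" "\<forall>y\<in>?D. y \<noteq> m \<longrightarrow> edge_gt m y"
    using ex_edge_gt_greatest by blast
  then show ?thesis using True unfolding set_gt_def by (auto simp: Un_commute)
qed (auto simp: set_gt_def)

lemma ex_set_gt_greatest:
  assumes "finite \<T>" "\<T> \<noteq> {}" "\<forall>T\<in>\<T>. finite T \<and> (\<forall>e\<in>T. card e = 2)"
  shows "\<exists>M\<in>\<T>. \<forall>T\<in>\<T>. T \<noteq> M \<longrightarrow> set_gt M T"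
  using assms
proof (induction \<T> rule: finite_ne_induct)
  case (insert x F)
  then obtain m where m: "m \<in> F" "\<forall>y\<in>F. y \<noteq> m \<longrightarrow> set_gt m y" by auto
  show ?case
  proof (cases "set_gt x m")
    case True
    have "set_gt x y" if "y \<in> F" "y \<noteq> m" for y
      using set_gt_trans[OF True, of y] m that insert.prems by auto
    then show ?thesis using True by auto
  next
    case False
    have "x \<noteq> m" using insert.hyps m by auto
    then have "set_gt m x" using False set_gt_total[of x m] insert.prems m by auto
    then show ?thesis using m by auto
  qed
qed simp

lemma spanning_tree_edge_leaving:
  assumes "spanning_tree V G" "u \<in> V" "u \<in> S" "w \<in> V" "w \<notin> S"
  obtains p q where "{p, q} \<in> G" "p \<in> S" "q \<notin> S"
proof -
  have "(u, w) \<in> (edge_rel G)\<^sup>*"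
    using assms(1,2,4) unfolding spanning_tree_def by blast
  then have "\<not> edge_rel G `` S \<subseteq> S"
    using Image_closed_trancl[of "edge_rel G" S] assms(3,5) by blast
  then show thesis using that unfolding edge_rel_def by blast
qed

lemma funpow_not_periodic:
  assumes "(f ^^ M) v = r" "f r = r" "v \<noteq> r"
  shows "(f ^^ Suc m) v \<noteq> v"
proof
  assume periodic: "(f ^^ Suc m) v = v"
  have root_fixed: "(f ^^ n) r = r" for n
    using assms(2) by (induction n) auto
  have "v = (f ^^ (M * Suc m)) v"
    using funpow_mod_eq[OF periodic, where m = "M * Suc m"] by (metis funpow_0 mod_mult_self2_is_0)
  also have "\<dots> = (f ^^ (M * m)) ((f ^^ M) v)"
    by (metis add.commute comp_apply funpow_add mult_Suc_right)
  finally show False using assms(1,3) root_fixed by simp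
qed

lemma parent_edge_is_bridge:
  assumes not_periodic: "\<And>m. (f ^^ Suc m) v \<noteq> v" and ab: "{a, b} = {v, f v}"
  shows "(a, b) \<notin> (edge_rel ((\<lambda>w. {w, f w}) ` U - {{v, f v}}))\<^sup>*"
proof
  let ?R = "edge_rel ((\<lambda>w. {w, f w}) ` U - {{v, f v}})"
  assume path: "(a, b) \<in> ?R\<^sup>*"
  define D where "D = {w. \<exists>m. (f ^^ m) w = v}"
  \<comment> \<open>no parent edge other than {v, f v} leaves the descendants of v\<close>
  have D_closed: "p \<in> D \<longleftrightarrow> q \<in> D" if pq: "(p, q) \<in> ?R" for p q
  proof -
    have pq_edge: "{p, q} \<in> (\<lambda>w. {w, f w}) ` U" "{p, q} \<noteq> {v, f v}"
      using pq unfolding edge_rel_def by auto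
    then obtain w where w1: "{p, q} = {w, f w}" by blast
    with pq_edge(2) have w: "{p, q} = {w, f w}" "{w, f w} \<noteq> {v, f v}" by simp_all
    have "w \<in> D \<longleftrightarrow> f w \<in> D"
    proof
      assume "w \<in> D"
      then obtain m where m: "(f ^^ m) w = v" unfolding D_def by auto
      with w(2) have "m \<noteq> 0" by (metis funpow_0)
      then obtain m' where "m = Suc m'" using not0_implies_Suc by blast
      with m have "(f ^^ m') (f w) = v" by (simp add: funpow_swap1)
      then show "f w \<in> D" unfolding D_def by auto
    next
      assume "f w \<in> D"
      then obtain m where "(f ^^ m) (f w) = v" unfolding D_def by blast
      then have "(f ^^ Suc m) w = v" by (simp only: funpow.simps(2) comp_apply funpow_swap1)
      then show "w \<in> D" unfolding D_def mem_Collect_eq by (rule exI)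
    qed
    with w(1) show ?thesis by (metis doubleton_eq_iff)
  qed
  have "a \<in> D \<longleftrightarrow> b \<in> D"
    using path
  proof (induction rule: rtrancl_induct)
    case (step y z)
    then show ?case using D_closed[of y z] by simp
  qed simp
  moreover have "v \<in> D" unfolding D_def by (auto intro: exI[of _ 0])
  moreover have "f v \<notin> D"
  proof
    assume "f v \<in> D"
    then obtain m where "(f ^^ m) (f v) = v" unfolding D_def by blast
    then have "(f ^^ Suc m) v = v" by (simp only: funpow.simps(2) comp_apply funpow_swap1)
    then show False using not_periodic by blast
  qed
  ultimately show False using ab by (auto simp: doubleton_eq_iff)
qed

lemma spanning_tree_of_parent:
  assumes r: "r \<in> V" and f_V: "f ` V \<subseteq> V" and f_r: "f r = r"
    and reach: "\<forall>v\<in>V. \<exists>m. (f ^^ m) v = r"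
  shows "spanning_tree V ((\<lambda>v. {v, f v}) ` (V - {r}))"
    (is "spanning_tree V ?T")
proof -
  have not_periodic: "(f ^^ Suc m) v \<noteq> v" if v: "v \<in> V" "v \<noteq> r" for v m
  proof -
    obtain M where "(f ^^ M) v = r" using reach v(1) by blast
    from funpow_not_periodic[where f = f and r = r, OF this f_r v(2)] show ?thesis .
  qed
  have edges: "e \<subseteq> V \<and> card e = 2" if "e \<in> ?T" for e
    using that f_V not_periodic[where m = 0] by (force simp: card_2_iff)
  have to_root: "(v, r) \<in> (edge_rel ?T)\<^sup>*" if "v \<in> V" "(f ^^ m) v = r" for v m
    using that
  proof (induction m arbitrary: v)
    case (Suc m)
    show ?case
    proof (cases "v = r")
      case False
      then have "(v, f v) \<in> edge_rel ?T" using Suc.prems unfolding edge_rel_def by auto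
      moreover have "(f v, r) \<in> (edge_rel ?T)\<^sup>*"
        using Suc f_V by (auto simp: funpow_Suc_right simp del: funpow.simps)
      ultimately show ?thesis by (rule converse_rtrancl_into_rtrancl)
    qed simp
  qed simp
  have connected: "(u, w) \<in> (edge_rel ?T)\<^sup>*" if "u \<in> V" "w \<in> V" for u w
  proof -
    have "(u, r) \<in> (edge_rel ?T)\<^sup>*" "(w, r) \<in> (edge_rel ?T)\<^sup>*"
      using that to_root reach by blast+
    moreover have "sym ((edge_rel ?T)\<^sup>*)"
      by (rule sym_rtrancl) (auto simp: edge_rel_def sym_def insert_commute)
    ultimately show ?thesis by (blast dest: symD intro: rtrancl_trans)
  qed
  have bridge: "(a, b) \<notin> (edge_rel (?T - {e}))\<^sup>*" if "e \<in> ?T" "e = {a, b}" for e a b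
  proof -
    obtain v where v: "v \<in> V" "v \<noteq> r" "e = {v, f v}" using \<open>e \<in> ?T\<close> by auto
    with \<open>e = {a, b}\<close> have "{a, b} = {v, f v}" by simp
    from parent_edge_is_bridge[OF not_periodic[OF v(1,2)] this] show ?thesis
      using v(3) by simp
  qed
  show ?thesis
    unfolding spanning_tree_def using edges connected bridge by (intro conjI ballI allI impI) auto
qed

(* Applied to a coupled tree T with a j = (spoke j \<in> T) and b j = (rim j \<in> T); the two
   alternatives are the two orientations of the rim. *)
lemma periodic_segment_dichotomy:
  fixes a b :: "nat \<Rightarrow> bool" and k :: nat
  assumes "0 < k" and a_periodic: "\<And>j. a (j mod k) = a j" and b_periodic: "\<And>j. b (j mod k) = b j"
    and segment: "\<And>i e. 0 < e \<Longrightarrow> \<forall>t\<in>{i<..i + e}. a t = b i \<Longrightarrow> b (i + e) \<noteq> b i"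
  shows "(\<forall>j. a j \<noteq> b j) \<or> (\<forall>j. b j \<noteq> a (Suc j))"
proof (rule disjCI)
  assume "\<not> (\<forall>j. b j \<noteq> a (Suc j))"
  then obtain i0 where i0: "b i0 = a (Suc i0)" by blast
  define run where "run j \<longleftrightarrow> (\<exists>i<j. \<forall>t\<in>{i<..j}. a t = b i)" for j
  have run_differs: "a j \<noteq> b j" if "run j" for j
  proof -
    obtain i where "i < j" "\<forall>t\<in>{i<..j}. a t = b i" using \<open>run j\<close> unfolding run_def by blast
    with segment[of "j - i" i] show ?thesis by auto
  qed
  have run_Suc: "run (Suc j)" if "run j" for j
  proof (cases "a (Suc j) = a j")
    case True
    obtain i where "i < j" "\<forall>t\<in>{i<..j}. a t = b i" using \<open>run j\<close> unfolding run_def by blast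
    with True show ?thesis unfolding run_def by (auto intro!: exI[of _ i] simp: le_Suc_eq)
  next
    case False
    with run_differs[OF that] have "a (Suc j) = b j" by blast
    then show ?thesis unfolding run_def by (auto intro!: exI[of _ j] simp: le_Suc_eq)
  qed
  have "run (Suc i0 + n)" for n
  proof (induction n)
    case 0
    have "a t = b i0" if "t \<in> {i0<..Suc i0}" for t
      using that i0 by (metis greaterThanAtMost_iff le_antisym Suc_leI)
    then show ?case unfolding run_def using lessI by auto
  next
    case (Suc n)
    then show ?case using run_Suc by simp
  qed
  show "\<forall>j. a j \<noteq> b j"
  proof
    fix j
    define j' where "j' = j + k * Suc i0"
    have "Suc i0 \<le> k * Suc i0" using \<open>0 < k\<close> by (cases k) auto
    then have "j' = Suc i0 + (j' - Suc i0)" unfolding j'_def by linarith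
    then have "a j' \<noteq> b j'"
      using run_differs \<open>\<And>n. run (Suc i0 + n)\<close> by metis
    moreover have "j' mod k = j mod k" unfolding j'_def by (rule mod_mult_self2)
    ultimately show "a j \<noteq> b j" using a_periodic b_periodic by metis
  qed
qed

lemma Suc_mod_eq_Suc_mod_iff: "Suc a mod k = Suc b mod k \<longleftrightarrow> a mod k = (b::nat) mod k"
  by (simp add: mod_Suc)

locale wheel =
  fixes v0 :: nat and vs :: "nat list"
  assumes length_ge_3: "3 \<le> length vs" and distinct: "distinct (v0 # vs)"
begin

abbreviation "k \<equiv> length vs"
abbreviation "V \<equiv> wheel_vertices v0 vs"
abbreviation "W \<equiv> wheel_edges v0 vs"

(* Rim indices are read modulo k, so that spoke and rim are k-periodic. *)
definition rim_vertex :: "nat \<Rightarrow> nat" where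
  "rim_vertex j = vs ! (j mod k)"

definition spoke :: "nat \<Rightarrow> nat set" where
  "spoke j = {v0, rim_vertex j}"

definition rim :: "nat \<Rightarrow> nat set" where
  "rim j = {rim_vertex j, rim_vertex (Suc j)}"

lemma k_pos: "0 < k"
  using length_ge_3 by linarith

lemma rim_vertex_less: "j < k \<Longrightarrow> rim_vertex j = vs ! j"
  by (simp add: rim_vertex_def)

lemma rim_vertex_eq_iff: "rim_vertex i = rim_vertex j \<longleftrightarrow> i mod k = j mod k"
  using distinct k_pos by (simp add: rim_vertex_def nth_eq_iff_index_eq)

lemma rim_vertex_ne_hub: "rim_vertex j \<noteq> v0"
  using distinct k_pos by (auto simp: rim_vertex_def)

lemma nth_eq_iff: "i < k \<Longrightarrow> j < k \<Longrightarrow> vs ! i = vs ! j \<longleftrightarrow> i = j"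
  using rim_vertex_eq_iff[of i j] by (simp add: rim_vertex_less)

lemma nth_ne_hub: "j < k \<Longrightarrow> vs ! j \<noteq> v0"
  using rim_vertex_ne_hub[of j] by (simp add: rim_vertex_less)

lemma spoke_less: "j < k \<Longrightarrow> spoke j = {v0, vs ! j}"
  by (simp add: spoke_def rim_vertex_less)

lemma spoke_mod: "spoke (j mod k) = spoke j"
  by (simp add: spoke_def rim_vertex_def)

lemma rim_mod: "rim (j mod k) = rim j"
  by (simp add: rim_def rim_vertex_def mod_Suc_eq)

lemma vertices_eq: "V = insert v0 ((!) vs ` {..<k})"
  unfolding wheel_vertices_def by (auto simp: in_set_conv_nth)

lemma edges_eq: "W = spoke ` {..<k} \<union> rim ` {..<k}"
  unfolding wheel_edges_def spoke_def rim_def by (auto simp: rim_vertex_def mod_Suc_eq)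

lemma spoke_in_edges: "spoke j \<in> W"
  unfolding edges_eq by (metis UnI1 imageI lessThan_iff mod_less_divisor k_pos spoke_mod)

lemma rim_in_edges: "rim j \<in> W"
  unfolding edges_eq by (metis UnI2 imageI lessThan_iff mod_less_divisor k_pos rim_mod)

lemma rim_vertex_in_vertices: "rim_vertex j \<in> V"
  unfolding vertices_eq rim_vertex_def using k_pos by auto

lemma hub_in_vertices: "v0 \<in> V"
  unfolding vertices_eq by simp

lemma card_rim: "card (rim j) = 2"
proof -
  have "Suc j mod k \<noteq> j mod k"
    using length_ge_3 by (auto simp: mod_Suc)
  then show ?thesis unfolding rim_def using rim_vertex_eq_iff by auto
qed

lemma edge_card_2: "e \<in> W \<Longrightarrow> card e = 2"
  unfolding edges_eq using card_rim rim_vertex_ne_hub by (auto simp: spoke_def card_2_iff)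

lemma finite_vertices: "finite V"
  unfolding vertices_eq by simp

lemma finite_edges: "finite W"
  unfolding edges_eq by simp

lemma hub_eq_Min_iff: "v0 = Min V \<longleftrightarrow> (\<forall>j<k. v0 < vs ! j)"
proof
  assume "v0 = Min V"
  then show "\<forall>j<k. v0 < vs ! j"
    using Min_le[OF finite_vertices] nth_ne_hub unfolding vertices_eq
    by (metis image_eqI insertCI lessThan_iff order_neq_le_trans)
next
  assume "\<forall>j<k. v0 < vs ! j"
  then show "v0 = Min V"
    using finite_vertices hub_in_vertices unfolding vertices_eq
    by (intro Min_eqI[symmetric]) auto
qed

lemma hub_eq_Max_iff: "v0 = Max V \<longleftrightarrow> (\<forall>j<k. vs ! j < v0)"
proof
  assume "v0 = Max V"
  then show "\<forall>j<k. vs ! j < v0"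
    using Max_ge[OF finite_vertices] nth_ne_hub unfolding vertices_eq
    by (metis image_eqI insertCI lessThan_iff order_neq_le_trans)
next
  assume "\<forall>j<k. vs ! j < v0"
  then show "v0 = Max V"
    using finite_vertices hub_in_vertices unfolding vertices_eq
    by (intro Max_eqI[symmetric]) auto
qed

lemma card_vertices_above_hub: "card {v \<in> V. v0 \<le> v} = Suc (card {i. i < k \<and> v0 < vs ! i})"
proof -
  have "{v \<in> V. v0 \<le> v} = insert v0 ((!) vs ` {i. i < k \<and> v0 < vs ! i})"
    unfolding vertices_eq using nth_ne_hub by force
  moreover have "v0 \<notin> (!) vs ` {i. i < k \<and> v0 < vs ! i}" using nth_ne_hub by auto
  moreover have "inj_on ((!) vs) {i. i < k \<and> v0 < vs ! i}"
    by (rule inj_onI) (simp add: nth_eq_iff)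
  ultimately show ?thesis by (simp add: card_image)
qed

lemma card_vertices_above_inner_hub:
  assumes "v0 \<noteq> Min V" "v0 \<noteq> Max V"
  shows "2 \<le> card {v \<in> V. v0 \<le> v}" "card {v \<in> V. v0 \<le> v} \<le> k"
proof -
  obtain jb ja where jb: "jb < k" "vs ! jb < v0" and ja: "ja < k" "v0 < vs ! ja"
    using assms nth_ne_hub hub_eq_Min_iff hub_eq_Max_iff by (meson linorder_neqE_nat)
  have "card {ja} \<le> card {i. i < k \<and> v0 < vs ! i}"
    by (rule card_mono) (use ja in auto)
  moreover have "card {i. i < k \<and> v0 < vs ! i} \<le> card ({..<k} - {jb})"
    by (rule card_mono) (use jb in auto)
  ultimately have "1 \<le> card {i. i < k \<and> v0 < vs ! i}" "card {i. i < k \<and> v0 < vs ! i} < k"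
    using jb(1) by simp_all
  then show "2 \<le> card {v \<in> V. v0 \<le> v}" "card {v \<in> V. v0 \<le> v} \<le> k"
    unfolding card_vertices_above_hub by simp_all
qed

definition rim_succ :: "nat \<Rightarrow> nat" where
  "rim_succ j = Suc j mod k"

definition rim_pred :: "nat \<Rightarrow> nat" where
  "rim_pred j = (if j = 0 then k - 1 else j - 1)"

lemma rim_succ_less: "rim_succ j < k"
  using k_pos by (simp add: rim_succ_def)

lemma rim_pred_less: "j < k \<Longrightarrow> rim_pred j < k"
  using k_pos by (simp add: rim_pred_def less_imp_diff_less)

lemma rim_succ_pred: "j < k \<Longrightarrow> rim_succ (rim_pred j) = j"
  using k_pos by (auto simp: rim_succ_def rim_pred_def)

lemma rim_pred_succ: "j < k \<Longrightarrow> rim_pred (rim_succ j) = j"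
  using k_pos by (auto simp: rim_succ_def rim_pred_def mod_Suc)

lemma rim_nth: "j < k \<Longrightarrow> rim j = {vs ! j, vs ! rim_succ j}"
  using k_pos by (simp add: rim_def rim_vertex_def rim_succ_def)

lemma rim_segment_not_isolated:
  assumes G: "spanning_tree V G" "G \<subseteq> W" and "0 < e"
    and rims: "rim i \<notin> G" "rim (i + e) \<notin> G"
    and spokes: "\<forall>t\<in>{i<..i + e}. spoke t \<notin> G"
  shows False
proof -
  define S where "S = rim_vertex ` {i<..i + e}"
  have "rim_vertex (Suc i) \<in> S" "v0 \<notin> S"
    using \<open>0 < e\<close> rim_vertex_ne_hub by (auto simp: S_def)
  then obtain p q where pq: "{p, q} \<in> G" "p \<in> S" "q \<notin> S"
    using spanning_tree_edge_leaving[OF G(1) rim_vertex_in_vertices _ hub_in_vertices] by blast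
  then obtain t where t: "i < t" "t \<le> i + e" "p = rim_vertex t"
    unfolding S_def by auto
  have "{p, q} \<in> W" using pq(1) G(2) by blast
  then obtain j where "{p, q} = spoke j \<or> {p, q} = rim j"
    unfolding edges_eq by blast
  then consider "{p, q} = spoke j" | "p = rim_vertex j" "q = rim_vertex (Suc j)"
    | "p = rim_vertex (Suc j)" "q = rim_vertex j"
    unfolding rim_def by (auto simp: doubleton_eq_iff)
  then show False
  proof cases
    case 1
    then have "p = rim_vertex j"
      using t(3) rim_vertex_ne_hub by (auto simp: spoke_def doubleton_eq_iff)
    then have "spoke j = spoke t"
      using t(3) rim_vertex_eq_iff by (metis spoke_mod)
    then show False using 1 pq(1) spokes t(1,2) by auto
  next
    case 2
    then have jt: "j mod k = t mod k" using t(3) rim_vertex_eq_iff by simp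
    then have "rim j = rim t" by (metis rim_mod)
    then have "t \<noteq> i + e" using 2 pq(1) rims(2) unfolding rim_def by auto
    moreover have "q = rim_vertex (Suc t)"
      using 2 jt by (simp add: rim_vertex_eq_iff Suc_mod_eq_Suc_mod_iff)
    ultimately show False using pq(3) t(1,2) by (auto simp: S_def)
  next
    case 3
    obtain t' where t': "t = Suc t'" using t(1) less_imp_Suc_add by blast
    then have jt: "j mod k = t' mod k"
      using 3 t(3) by (simp add: rim_vertex_eq_iff Suc_mod_eq_Suc_mod_iff)
    then have "rim j = rim t'" by (metis rim_mod)
    then have "t' \<noteq> i" using 3 pq(1) rims(1) unfolding rim_def by (auto simp: insert_commute)
    moreover have "q = rim_vertex t'" using 3 jt by (simp add: rim_vertex_eq_iff)
    ultimately show False using pq(3) t(1,2) t' by (auto simp: S_def)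
  qed
qed

definition rim_index :: "nat \<Rightarrow> nat" where
  "rim_index = the_inv_into {..<k} ((!) vs)"

lemma rim_index_nth: "j < k \<Longrightarrow> rim_index (vs ! j) = j"
  unfolding rim_index_def using nth_eq_iff by (intro the_inv_into_f_f inj_onI) auto

definition choice_edge :: "(nat \<Rightarrow> nat) \<Rightarrow> (nat \<Rightarrow> bool) \<Rightarrow> nat \<Rightarrow> nat set" where
  "choice_edge \<sigma> c j = (if c j then {v0, vs ! j} else {vs ! j, vs ! \<sigma> j})"

definition choice_tree :: "(nat \<Rightarrow> nat) \<Rightarrow> (nat \<Rightarrow> bool) \<Rightarrow> nat set set" where
  "choice_tree \<sigma> c = choice_edge \<sigma> c ` {..<k}"

definition choice_parent :: "(nat \<Rightarrow> nat) \<Rightarrow> (nat \<Rightarrow> bool) \<Rightarrow> nat \<Rightarrow> nat" where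
  "choice_parent \<sigma> c v = (if v = v0 \<or> c (rim_index v) then v0 else vs ! \<sigma> (rim_index v))"

end

locale wheel_orientation = wheel +
  fixes \<sigma> :: "nat \<Rightarrow> nat"
  assumes orient_less: "j < k \<Longrightarrow> \<sigma> j < k"
    and orient_inj: "inj_on \<sigma> {..<k}"
    and orient_cyclic: "i < k \<Longrightarrow> j < k \<Longrightarrow> \<exists>m. (\<sigma> ^^ m) i = j"
    and orient_no_2_cycle: "j < k \<Longrightarrow> \<sigma> (\<sigma> j) \<noteq> j"
    and orient_rims: "(\<lambda>j. {vs ! j, vs ! \<sigma> j}) ` {..<k} = rim ` {..<k}"
begin

lemma orient_surj: "\<sigma> ` {..<k} = {..<k}"
  using orient_less orient_inj by (intro endo_inj_surj) auto

lemma ex_orient_iff: "(\<exists>j<k. P (\<sigma> j)) \<longleftrightarrow> (\<exists>i<k. P i)"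
  using orient_surj orient_less by (metis imageE lessThan_iff)

lemma card_orient_preimage: "card {j. j < k \<and> P (\<sigma> j)} = card {i. i < k \<and> P i}"
proof -
  have "\<sigma> ` {j. j < k \<and> P (\<sigma> j)} = {i. i < k \<and> P i}"
    using orient_surj orient_less by auto
  moreover have "inj_on \<sigma> {j. j < k \<and> P (\<sigma> j)}"
    using orient_inj by (rule inj_on_subset) auto
  ultimately show ?thesis by (metis card_image)
qed

lemma oriented_rim_is_rim: "j < k \<Longrightarrow> \<exists>i. {vs ! j, vs ! \<sigma> j} = rim i"
  using orient_rims by blast

lemma nth_ne_nth_orient:
  assumes "j < k"
  shows "vs ! j \<noteq> vs ! \<sigma> j"
proof -
  obtain i where "{vs ! j, vs ! \<sigma> j} = rim i" using oriented_rim_is_rim[OF assms] by blast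
  then have "card {vs ! j, vs ! \<sigma> j} = 2" using card_rim by simp
  then show ?thesis by (cases "vs ! j = vs ! \<sigma> j") simp_all
qed

lemma orient_ne: "j < k \<Longrightarrow> \<sigma> j \<noteq> j"
  using nth_ne_nth_orient by metis

lemma choice_edge_eq_iff:
  assumes "j < k" "t < k"
  shows "choice_edge \<sigma> c j = choice_edge \<sigma> c' t \<longleftrightarrow> j = t \<and> c j = c' t"
proof -
  have hub: "vs ! j \<noteq> v0" "vs ! t \<noteq> v0" "vs ! \<sigma> j \<noteq> v0" "vs ! \<sigma> t \<noteq> v0"
    using assms nth_ne_hub orient_less by auto
  have rims: "{vs ! j, vs ! \<sigma> j} = {vs ! t, vs ! \<sigma> t} \<longleftrightarrow> j = t"
  proof
    assume "{vs ! j, vs ! \<sigma> j} = {vs ! t, vs ! \<sigma> t}"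
    then have "j = t \<or> (j = \<sigma> t \<and> \<sigma> j = t)"
      using assms orient_less nth_eq_iff by (auto simp: doubleton_eq_iff)
    then show "j = t" using orient_no_2_cycle assms(2) by blast
  qed simp
  show ?thesis
    unfolding choice_edge_def using hub rims assms nth_eq_iff
    by (cases "c j"; cases "c' t") (auto simp: doubleton_eq_iff)
qed

lemma choice_edge_in_edges:
  assumes "j < k"
  shows "choice_edge \<sigma> c j \<in> W"
proof (cases "c j")
  case True
  then show ?thesis using spoke_in_edges[of j] spoke_less[OF assms] by (simp add: choice_edge_def)
next
  case False
  obtain i where "{vs ! j, vs ! \<sigma> j} = rim i" using oriented_rim_is_rim[OF assms] by blast
  then show ?thesis using False rim_in_edges[of i] by (simp add: choice_edge_def)
qed

lemma choice_tree_subset_edges: "choice_tree \<sigma> c \<subseteq> W"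
  unfolding choice_tree_def using choice_edge_in_edges by blast

lemma card_choice_tree: "card (choice_tree \<sigma> c) = k"
proof -
  have "inj_on (choice_edge \<sigma> c) {..<k}"
    by (rule inj_onI) (simp add: choice_edge_eq_iff)
  then show ?thesis unfolding choice_tree_def by (simp add: card_image)
qed

lemma choice_edge_in_choice_tree_iff:
  assumes "j < k"
  shows "choice_edge \<sigma> d j \<in> choice_tree \<sigma> d' \<longleftrightarrow> d j = d' j"
proof
  assume "choice_edge \<sigma> d j \<in> choice_tree \<sigma> d'"
  then obtain t where "t < k" "choice_edge \<sigma> d j = choice_edge \<sigma> d' t"
    unfolding choice_tree_def by blast
  then show "d j = d' j" using choice_edge_eq_iff[OF assms \<open>t < k\<close>] by metis
next
  assume "d j = d' j"
  then have "choice_edge \<sigma> d j = choice_edge \<sigma> d' j" by (simp add: choice_edge_def)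
  with assms show "choice_edge \<sigma> d j \<in> choice_tree \<sigma> d'" unfolding choice_tree_def by blast
qed

lemma choice_tree_diff:
  "choice_tree \<sigma> d - choice_tree \<sigma> d' = choice_edge \<sigma> d ` {j. j < k \<and> d j \<noteq> d' j}"
proof (intro equalityI subsetI)
  fix e assume "e \<in> choice_tree \<sigma> d - choice_tree \<sigma> d'"
  then obtain j where "j < k" "e = choice_edge \<sigma> d j" "e \<notin> choice_tree \<sigma> d'"
    unfolding choice_tree_def by blast
  then show "e \<in> choice_edge \<sigma> d ` {j. j < k \<and> d j \<noteq> d' j}"
    using choice_edge_in_choice_tree_iff by auto
next
  fix e assume "e \<in> choice_edge \<sigma> d ` {j. j < k \<and> d j \<noteq> d' j}"
  then obtain j where "j < k" "d j \<noteq> d' j" "e = choice_edge \<sigma> d j" by blast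
  moreover have "choice_edge \<sigma> d j \<in> choice_tree \<sigma> d"
    using \<open>j < k\<close> unfolding choice_tree_def by blast
  ultimately show "e \<in> choice_tree \<sigma> d - choice_tree \<sigma> d'"
    using choice_edge_in_choice_tree_iff by simp
qed

lemma edges_diff_choice_tree: "W - choice_tree \<sigma> c = choice_tree \<sigma> (\<lambda>j. \<not> c j)"
proof -
  have "W = choice_tree \<sigma> c \<union> choice_tree \<sigma> (\<lambda>j. \<not> c j)"
  proof
    show "W \<subseteq> choice_tree \<sigma> c \<union> choice_tree \<sigma> (\<lambda>j. \<not> c j)"
    proof
      fix e assume "e \<in> W"
      then obtain j where "j < k" "e = choice_edge \<sigma> c j \<or> e = choice_edge \<sigma> (\<lambda>j. \<not> c j) j"
        unfolding edges_eq orient_rims[symmetric] choice_edge_def using spoke_less by auto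
      then show "e \<in> choice_tree \<sigma> c \<union> choice_tree \<sigma> (\<lambda>j. \<not> c j)"
        unfolding choice_tree_def by blast
    qed
  qed (use choice_tree_subset_edges in blast)
  moreover have "e \<notin> choice_tree \<sigma> (\<lambda>j. \<not> c j)" if e: "e \<in> choice_tree \<sigma> c" for e
  proof -
    obtain j where "j < k" "e = choice_edge \<sigma> c j"
      using e unfolding choice_tree_def by blast
    then show ?thesis using choice_edge_in_choice_tree_iff by simp
  qed
  ultimately show ?thesis by blast
qed

lemma choice_parent_nth: "j < k \<Longrightarrow> choice_parent \<sigma> c (vs ! j) = (if c j then v0 else vs ! \<sigma> j)"
  using rim_index_nth nth_ne_hub by (simp add: choice_parent_def)

lemma choice_parent_hub: "choice_parent \<sigma> c v0 = v0"
  by (simp add: choice_parent_def)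

lemma choice_parent_in_vertices: "choice_parent \<sigma> c ` V \<subseteq> V"
  using choice_parent_nth choice_parent_hub orient_less unfolding vertices_eq by auto

lemma choice_parent_reaches_hub_along_orbit:
  assumes "i < k" "c ((\<sigma> ^^ m) i)"
  shows "\<exists>n. (choice_parent \<sigma> c ^^ n) (vs ! i) = v0"
  using assms
proof (induction m arbitrary: i)
  case 0
  then have "(choice_parent \<sigma> c ^^ 1) (vs ! i) = v0" using choice_parent_nth by simp
  then show ?case by blast
next
  case (Suc m)
  show ?case
  proof (cases "c i")
    case True
    then have "(choice_parent \<sigma> c ^^ 1) (vs ! i) = v0" using choice_parent_nth Suc.prems(1) by simp
    then show ?thesis by blast
  next
    case False
    have "c ((\<sigma> ^^ m) (\<sigma> i))" using Suc.prems(2) by (simp add: funpow_swap1)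
    then obtain n where "(choice_parent \<sigma> c ^^ n) (vs ! \<sigma> i) = v0"
      using Suc.IH orient_less Suc.prems(1) by blast
    moreover have "choice_parent \<sigma> c (vs ! i) = vs ! \<sigma> i"
      using choice_parent_nth Suc.prems(1) False by simp
    ultimately have "(choice_parent \<sigma> c ^^ Suc n) (vs ! i) = v0"
      by (simp only: funpow.simps(2) comp_apply funpow_swap1)
    then show ?thesis by blast
  qed
qed

lemma choice_parent_reaches_hub:
  assumes "\<exists>j<k. c j" "v \<in> V"
  shows "\<exists>n. (choice_parent \<sigma> c ^^ n) v = v0"
proof -
  consider "v = v0" | i where "i < k" "v = vs ! i" using assms(2) unfolding vertices_eq by auto
  then show ?thesis
  proof cases
    case 1
    then have "(choice_parent \<sigma> c ^^ 0) v = v0" by simp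
    then show ?thesis by blast
  next
    case 2
    obtain j where "j < k" "c j" using assms(1) by blast
    with 2 obtain m where "(\<sigma> ^^ m) i = j" using orient_cyclic by blast
    then show ?thesis using choice_parent_reaches_hub_along_orbit 2 \<open>c j\<close> by blast
  qed
qed

lemma parent_edges_choice_parent:
  "(\<lambda>v. {v, choice_parent \<sigma> c v}) ` (V - {v0}) = choice_tree \<sigma> c"
proof -
  have "V - {v0} = (!) vs ` {..<k}"
    unfolding vertices_eq using nth_ne_hub by auto
  then have "(\<lambda>v. {v, choice_parent \<sigma> c v}) ` (V - {v0})
      = (\<lambda>j. {vs ! j, choice_parent \<sigma> c (vs ! j)}) ` {..<k}"
    by (simp add: image_image)
  also have "\<dots> = choice_tree \<sigma> c"
    unfolding choice_tree_def
    by (rule image_cong) (simp_all add: choice_parent_nth choice_edge_def insert_commute)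
  finally show ?thesis .
qed

lemma spanning_tree_choice_tree:
  assumes "\<exists>j<k. c j"
  shows "spanning_tree V (choice_tree \<sigma> c)"
  using spanning_tree_of_parent[OF hub_in_vertices choice_parent_in_vertices choice_parent_hub]
    choice_parent_reaches_hub[OF assms] parent_edges_choice_parent
  by simp

lemma choice_tree_has_spoke:
  assumes "spanning_tree V (choice_tree \<sigma> c)"
  shows "\<exists>j<k. c j"
proof (rule ccontr)
  assume no_spoke: "\<not> (\<exists>j<k. c j)"
  have "vs ! 0 \<in> V" "vs ! 0 \<in> set vs" "v0 \<notin> set vs"
    using k_pos distinct unfolding vertices_eq by auto
  then obtain p q where pq: "{p, q} \<in> choice_tree \<sigma> c" "p \<in> set vs" "q \<notin> set vs"
    using spanning_tree_edge_leaving[OF assms _ _ hub_in_vertices] by blast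
  then obtain j where "j < k" "{p, q} = {vs ! j, vs ! \<sigma> j}"
    using no_spoke unfolding choice_tree_def choice_edge_def by auto
  then show False using pq(3) orient_less by (auto simp: doubleton_eq_iff)
qed

lemma coupled_tree_choice_tree_iff:
  "coupled_tree v0 vs (choice_tree \<sigma> c) \<longleftrightarrow> (\<exists>j<k. c j) \<and> (\<exists>j<k. \<not> c j)"
proof -
  have "coupled_tree v0 vs (choice_tree \<sigma> c) \<longleftrightarrow>
      spanning_tree V (choice_tree \<sigma> c) \<and> spanning_tree V (choice_tree \<sigma> (\<lambda>j. \<not> c j))"
    unfolding coupled_tree_def edges_diff_choice_tree using choice_tree_subset_edges by simp
  also have "\<dots> \<longleftrightarrow> (\<exists>j<k. c j) \<and> (\<exists>j<k. \<not> c j)"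
    using spanning_tree_choice_tree[of c] choice_tree_has_spoke[of c]
      spanning_tree_choice_tree[of "\<lambda>j. \<not> c j"] choice_tree_has_spoke[of "\<lambda>j. \<not> c j"]
    by argo
  finally show ?thesis .
qed

lemma val_choice_tree: "val (choice_tree \<sigma> c) y = card {j. j < k \<and> y \<in> choice_edge \<sigma> c j}"
proof -
  have "{e \<in> choice_tree \<sigma> c. y \<in> e} = choice_edge \<sigma> c ` {j. j < k \<and> y \<in> choice_edge \<sigma> c j}"
    unfolding choice_tree_def by blast
  moreover have "inj_on (choice_edge \<sigma> c) {j. j < k \<and> y \<in> choice_edge \<sigma> c j}"
    by (rule inj_onI) (simp add: choice_edge_eq_iff)
  ultimately show ?thesis unfolding val_def by (simp add: card_image)
qed

lemma val_choice_tree_hub: "val (choice_tree \<sigma> c) v0 = card {j. j < k \<and> c j}"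
proof -
  have "v0 \<in> choice_edge \<sigma> c j \<longleftrightarrow> c j" if "j < k" for j
    using nth_ne_hub that orient_less by (auto simp: choice_edge_def)
  then show ?thesis unfolding val_choice_tree by metis
qed

lemma val_choice_tree_nth:
  assumes "i < k" "p < k" "\<sigma> p = i"
  shows "val (choice_tree \<sigma> c) (vs ! i) = (if c p then 1 else 2)"
proof -
  have "vs ! i \<in> choice_edge \<sigma> c j \<longleftrightarrow> j = i \<or> (\<not> c j \<and> j = p)" if "j < k" for j
  proof -
    have "\<sigma> j = i \<longleftrightarrow> j = p"
      using orient_inj assms that by (auto dest: inj_onD)
    then show ?thesis
      using that assms nth_eq_iff nth_ne_hub orient_less by (auto simp: choice_edge_def)
  qed
  then have "{j. j < k \<and> vs ! i \<in> choice_edge \<sigma> c j} = (if c p then {i} else {i, p})"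
    using assms by auto
  moreover have "p \<noteq> i" using orient_ne assms by blast
  ultimately show ?thesis unfolding val_choice_tree by simp
qed

lemma set_gt_choice_tree:
  assumes "\<exists>j<k. c j \<noteq> c' j"
    and better: "\<forall>j<k. c j \<noteq> c' j \<longrightarrow> edge_gt (choice_edge \<sigma> c' j) (choice_edge \<sigma> c j)"
  shows "set_gt (choice_tree \<sigma> c') (choice_tree \<sigma> c)"
proof -
  define D where "D = {j. j < k \<and> c j \<noteq> c' j}"
  have diffs: "choice_tree \<sigma> c' - choice_tree \<sigma> c = choice_edge \<sigma> c' ` D"
    "choice_tree \<sigma> c - choice_tree \<sigma> c' = choice_edge \<sigma> c ` D"
    unfolding D_def choice_tree_diff by auto
  let ?S = "choice_edge \<sigma> c' ` D \<union> choice_edge \<sigma> c ` D"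
  have fin: "finite ?S" and nonempty: "?S \<noteq> {}"
    using assms(1) unfolding D_def by auto
  have "\<forall>e\<in>?S. card e = 2"
    using choice_edge_in_edges edge_card_2 unfolding D_def by blast
  from ex_edge_gt_greatest[OF fin nonempty this]
  obtain m where m: "m \<in> ?S" "\<forall>y\<in>?S. y \<noteq> m \<longrightarrow> edge_gt m y" by (elim bexE conjE) (rule that)
  have "m \<in> choice_edge \<sigma> c' ` D"
  proof (rule ccontr)
    assume "m \<notin> choice_edge \<sigma> c' ` D"
    then obtain j where j: "j \<in> D" "m = choice_edge \<sigma> c j" using m(1) by blast
    then have "j < k" "c j \<noteq> c' j" unfolding D_def by auto
    then have "choice_edge \<sigma> c' j \<noteq> m" using j(2) choice_edge_eq_iff by metis
    then have "edge_gt m (choice_edge \<sigma> c' j)" using m(2) j(1) by blast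
    moreover have "edge_gt (choice_edge \<sigma> c' j) m"
      using better \<open>j < k\<close> \<open>c j \<noteq> c' j\<close> j(2) by blast
    ultimately show False using edge_gt_asym by blast
  qed
  then show ?thesis
    unfolding set_gt_def card_choice_tree diffs using m by (auto simp: Un_commute)
qed

end

context wheel
begin

lemma wheel_orientation_rim_succ: "wheel_orientation v0 vs rim_succ"
proof unfold_locales
  show "inj_on rim_succ {..<k}"
    by (rule inj_onI) (metis lessThan_iff rim_pred_succ)
  show "\<exists>m. (rim_succ ^^ m) i = j" if "i < k" "j < k" for i j
  proof -
    have "(rim_succ ^^ m) i = (i + m) mod k" for m
      using \<open>i < k\<close> by (induction m) (simp_all add: rim_succ_def mod_Suc_eq)
    then have "(rim_succ ^^ (j + k - i)) i = j"
      using that by simp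
    then show ?thesis by blast
  qed
  show "rim_succ (rim_succ j) \<noteq> j" if "j < k" for j
    using that length_ge_3 by (auto simp: rim_succ_def mod_Suc)
  show "(\<lambda>j. {vs ! j, vs ! rim_succ j}) ` {..<k} = rim ` {..<k}"
    by (rule image_cong) (simp_all add: rim_nth)
qed (rule rim_succ_less)

lemma wheel_orientation_inverse:
  assumes "wheel_orientation v0 vs \<sigma>" and \<tau>_less: "\<And>j. j < k \<Longrightarrow> \<tau> j < k"
    and \<sigma>_\<tau>: "\<And>j. j < k \<Longrightarrow> \<sigma> (\<tau> j) = j" and \<tau>_\<sigma>: "\<And>j. j < k \<Longrightarrow> \<tau> (\<sigma> j) = j"
  shows "wheel_orientation v0 vs \<tau>"
proof -
  interpret \<sigma>: wheel_orientation v0 vs \<sigma> by fact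
  show ?thesis
  proof unfold_locales
    show "inj_on \<tau> {..<k}"
      by (rule inj_onI) (metis lessThan_iff \<sigma>_\<tau>)
    show "\<exists>m. (\<tau> ^^ m) i = j" if ij: "i < k" "j < k" for i j
    proof -
      obtain m where m: "(\<sigma> ^^ m) j = i" using \<sigma>.orient_cyclic ij by blast
      have "(\<tau> ^^ m) ((\<sigma> ^^ m) j) = j"
        using \<open>j < k\<close>
      proof (induction m arbitrary: j)
        case (Suc m)
        then show ?case
          using \<tau>_\<sigma> \<sigma>.orient_less by (simp add: funpow_swap1)
      qed simp
      then show ?thesis using m by blast
    qed
    show "\<tau> (\<tau> j) \<noteq> j" if "j < k" for j
      using \<sigma>.orient_no_2_cycle \<sigma>_\<tau> \<tau>_less that by metis
    have "(\<lambda>j. {vs ! j, vs ! \<tau> j}) ` {..<k} = (\<lambda>j. {vs ! j, vs ! \<tau> j}) ` (\<sigma> ` {..<k})"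
      by (simp only: \<sigma>.orient_surj)
    also have "\<dots> = (\<lambda>j. {vs ! j, vs ! \<sigma> j}) ` {..<k}"
      unfolding image_image by (rule image_cong) (simp_all add: \<tau>_\<sigma> insert_commute)
    also have "\<dots> = rim ` {..<k}"
      by (rule \<sigma>.orient_rims)
    finally show "(\<lambda>j. {vs ! j, vs ! \<tau> j}) ` {..<k} = rim ` {..<k}" .
  qed (rule \<tau>_less)
qed

lemma wheel_orientation_rim_pred: "wheel_orientation v0 vs rim_pred"
  using wheel_orientation_inverse[OF wheel_orientation_rim_succ]
    rim_pred_less rim_succ_pred rim_pred_succ by blast

lemma choice_tree_eqI:
  assumes "wheel_orientation v0 vs \<sigma>" "T \<subseteq> W"
    and spokes: "\<And>j. j < k \<Longrightarrow> spoke j \<in> T \<longleftrightarrow> c j"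
    and rims: "\<And>j. j < k \<Longrightarrow> {vs ! j, vs ! \<sigma> j} \<in> T \<longleftrightarrow> \<not> c j"
  shows "T = choice_tree \<sigma> c"
proof -
  interpret wheel_orientation v0 vs \<sigma> by fact
  have mem: "choice_edge \<sigma> d j \<in> T \<longleftrightarrow> d j = c j" if "j < k" for d j
    using spokes[OF that] rims[OF that] spoke_less[OF that] by (simp add: choice_edge_def)
  have "T \<subseteq> choice_tree \<sigma> c \<union> choice_tree \<sigma> (\<lambda>j. \<not> c j)"
    using \<open>T \<subseteq> W\<close> edges_diff_choice_tree by blast
  moreover have "T \<inter> choice_tree \<sigma> (\<lambda>j. \<not> c j) = {}"
    using mem unfolding choice_tree_def by auto
  moreover have "choice_tree \<sigma> c \<subseteq> T"
    using mem unfolding choice_tree_def by auto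
  ultimately show ?thesis by blast
qed

lemma coupled_tree_rim_segment:
  assumes "coupled_tree v0 vs T" "0 < e"
    and "\<forall>t\<in>{i<..i + e}. (spoke t \<in> T) = (rim i \<in> T)"
  shows "(rim (i + e) \<in> T) \<noteq> (rim i \<in> T)"
proof
  assume same: "(rim (i + e) \<in> T) = (rim i \<in> T)"
  define G where "G = (if rim i \<in> T then W - T else T)"
  have G: "spanning_tree V G" "G \<subseteq> W"
    using assms(1) unfolding coupled_tree_def G_def by auto
  have outside: "x \<notin> G \<longleftrightarrow> (x \<in> T \<longleftrightarrow> rim i \<in> T)" if "x \<in> W" for x
    using that by (auto simp: G_def)
  have "rim i \<notin> G" "rim (i + e) \<notin> G"
    using outside rim_in_edges same by simp_all
  moreover have "\<forall>t\<in>{i<..i + e}. spoke t \<notin> G"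
    using outside spoke_in_edges assms(3) by simp
  ultimately show False by (rule rim_segment_not_isolated[OF G \<open>0 < e\<close>])
qed

lemma coupled_tree_is_choice_tree:
  assumes "coupled_tree v0 vs T"
  obtains \<sigma> c where "wheel_orientation v0 vs \<sigma>" "T = choice_tree \<sigma> c"
proof -
  have T_W: "T \<subseteq> W" using assms unfolding coupled_tree_def by blast
  define a where "a j \<longleftrightarrow> spoke j \<in> T" for j
  define b where "b j \<longleftrightarrow> rim j \<in> T" for j
  have "(\<forall>j. a j \<noteq> b j) \<or> (\<forall>j. b j \<noteq> a (Suc j))"
  proof (rule periodic_segment_dichotomy[where a = a and b = b, OF k_pos])
    show "b (i + e) \<noteq> b i" if "0 < e" "\<forall>t\<in>{i<..i + e}. a t = b i" for i e
      using coupled_tree_rim_segment[OF assms] that unfolding a_def b_def by blast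
  qed (simp_all add: a_def b_def spoke_mod rim_mod)
  then show thesis
  proof
    assume "\<forall>j. a j \<noteq> b j"
    then have "T = choice_tree rim_succ a"
      using wheel_orientation_rim_succ T_W
      by (intro choice_tree_eqI) (auto simp: a_def b_def rim_nth)
    then show thesis using that wheel_orientation_rim_succ by blast
  next
    assume ba: "\<forall>j. b j \<noteq> a (Suc j)"
    have "{vs ! j, vs ! rim_pred j} \<in> T \<longleftrightarrow> \<not> a j" if "j < k" for j
    proof -
      have "{vs ! j, vs ! rim_pred j} = rim (rim_pred j)"
        using that rim_nth rim_pred_less rim_succ_pred by (simp add: insert_commute)
      moreover have "a (Suc (rim_pred j)) = a j"
        using that rim_succ_pred spoke_mod unfolding a_def rim_succ_def by metis
      ultimately show ?thesis using ba unfolding b_def by metis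
    qed
    then have "T = choice_tree rim_pred a"
      using wheel_orientation_rim_pred T_W by (intro choice_tree_eqI) (auto simp: a_def)
    then show thesis using that wheel_orientation_rim_pred by blast
  qed
qed

lemma leading_tree_spec:
  "coupled_tree v0 vs (leading_tree v0 vs) \<and>
    (\<forall>T. coupled_tree v0 vs T \<and> T \<noteq> leading_tree v0 vs \<longrightarrow> set_gt (leading_tree v0 vs) T)"
proof -
  let ?C = "{T. coupled_tree v0 vs T}"
  have "?C \<subseteq> Pow W" unfolding coupled_tree_def by auto
  then have fin: "finite ?C" and elems: "\<forall>T\<in>?C. finite T \<and> (\<forall>e\<in>T. card e = 2)"
    using finite_edges edge_card_2 finite_subset by blast+
  have "coupled_tree v0 vs (choice_tree rim_succ (\<lambda>j. j = 0))"
  proof -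
    interpret wheel_orientation v0 vs rim_succ by (rule wheel_orientation_rim_succ)
    have "0 < k" "1 < k" using k_pos length_ge_3 by linarith+
    then show ?thesis unfolding coupled_tree_choice_tree_iff by (meson one_neq_zero)
  qed
  then have "?C \<noteq> {}" by blast
  from ex_set_gt_greatest[OF fin this elems]
  obtain M where M: "coupled_tree v0 vs M" "\<forall>T. coupled_tree v0 vs T \<and> T \<noteq> M \<longrightarrow> set_gt M T"
    by auto
  have "leading_tree v0 vs = M"
    unfolding leading_tree_def
  proof (rule the_equality)
    fix T assume T: "coupled_tree v0 vs T \<and> (\<forall>T'. coupled_tree v0 vs T' \<and> T' \<noteq> T \<longrightarrow> set_gt T T')"
    show "T = M"
    proof (rule ccontr)
      assume "T \<noteq> M"
      then have "set_gt T M" "set_gt M T" using T M by auto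
      then show False using set_gt_asym by blast
    qed
  qed (use M in blast)
  then show ?thesis using M by simp
qed

end

context wheel_orientation
begin

lemma edge_gt_choice_edge_towards_order:
  assumes "j < k" "c j \<noteq> c' j" "c' j \<longleftrightarrow> v0 < vs ! \<sigma> j"
  shows "edge_gt (choice_edge \<sigma> c' j) (choice_edge \<sigma> c j)"
proof -
  have "distinct [v0, vs ! j, vs ! \<sigma> j]"
    using assms(1) nth_ne_hub orient_less nth_ne_nth_orient by auto
  then show ?thesis
    using assms edge_gt_spoke_rim_iff edge_gt_rim_spoke_iff nat_neq_iff
    by (cases "c' j") (auto simp: choice_edge_def)
qed

lemma leading_choice_tree_no_improvement:
  assumes LT: "leading_tree v0 vs = choice_tree \<sigma> c"
    and valid: "\<exists>j<k. c' j" "\<exists>j<k. \<not> c' j"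
    and differs: "\<exists>j<k. c j \<noteq> c' j"
    and towards: "\<forall>j<k. c j \<noteq> c' j \<longrightarrow> (c' j \<longleftrightarrow> v0 < vs ! \<sigma> j)"
  shows False
proof -
  have gt: "set_gt (choice_tree \<sigma> c') (choice_tree \<sigma> c)"
    using differs towards edge_gt_choice_edge_towards_order by (intro set_gt_choice_tree) auto
  then have "choice_tree \<sigma> c' \<noteq> choice_tree \<sigma> c" by (metis set_gt_asym)
  moreover have "coupled_tree v0 vs (choice_tree \<sigma> c')"
    using valid coupled_tree_choice_tree_iff by blast
  ultimately have "set_gt (choice_tree \<sigma> c) (choice_tree \<sigma> c')"
    using leading_tree_spec LT by auto
  then show False using gt set_gt_asym by blast
qed

lemma leading_choice_tree_valid:
  assumes "leading_tree v0 vs = choice_tree \<sigma> c"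
  shows "\<exists>j<k. c j" "\<exists>j<k. \<not> c j"
  using leading_tree_spec assms coupled_tree_choice_tree_iff by auto

lemma leading_choice_tree_spokes_if_hub_min:
  assumes LT: "leading_tree v0 vs = choice_tree \<sigma> c" and min: "\<forall>j<k. v0 < vs ! j"
  shows "card {j. j < k \<and> c j} = k - 1"
proof -
  obtain j0 where j0: "j0 < k" "\<not> c j0" using leading_choice_tree_valid[OF LT] by blast
  have "c j" if "j < k" "j \<noteq> j0" for j
  proof (rule ccontr)
    assume "\<not> c j"
    let ?c' = "c(j := True)"
    have "?c' j" "\<not> ?c' j0" "c j \<noteq> ?c' j" using that j0 \<open>\<not> c j\<close> by simp_all
    moreover have "\<forall>i<k. c i \<noteq> ?c' i \<longrightarrow> (?c' i \<longleftrightarrow> v0 < vs ! \<sigma> i)"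
      using min orient_less by simp
    ultimately show False
      using leading_choice_tree_no_improvement[OF LT, of ?c'] that(1) j0(1) by blast
  qed
  then have "{j. j < k \<and> c j} = {..<k} - {j0}" using j0 by auto
  then show ?thesis using j0(1) by simp
qed

lemma leading_choice_tree_spokes_if_hub_max:
  assumes LT: "leading_tree v0 vs = choice_tree \<sigma> c" and max: "\<forall>j<k. vs ! j < v0"
  shows "card {j. j < k \<and> c j} = 1"
proof -
  obtain j0 where j0: "j0 < k" "c j0" using leading_choice_tree_valid[OF LT] by blast
  have "\<not> c j" if "j < k" "j \<noteq> j0" for j
  proof
    assume "c j"
    let ?c' = "c(j := False)"
    have "\<not> v0 < vs ! \<sigma> j" using max orient_less that(1) less_asym by blast
    then have "\<forall>i<k. c i \<noteq> ?c' i \<longrightarrow> (?c' i \<longleftrightarrow> v0 < vs ! \<sigma> i)" by simp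
    moreover have "\<not> ?c' j" "?c' j0" "c j \<noteq> ?c' j" using that j0 \<open>c j\<close> by simp_all
    ultimately show False
      using leading_choice_tree_no_improvement[OF LT, of ?c'] that(1) j0(1) by blast
  qed
  then have "{j. j < k \<and> c j} = {j0}" using j0 by auto
  then show ?thesis by simp
qed

lemma leading_choice_tree_eq_order:
  assumes LT: "leading_tree v0 vs = choice_tree \<sigma> c"
    and below: "\<exists>j<k. vs ! j < v0" and above: "\<exists>j<k. v0 < vs ! j"
  shows "\<forall>j<k. c j \<longleftrightarrow> v0 < vs ! \<sigma> j"
proof (rule ccontr)
  assume "\<not> (\<forall>j<k. c j \<longleftrightarrow> v0 < vs ! \<sigma> j)"
  then have differs: "\<exists>j<k. c j \<noteq> (v0 < vs ! \<sigma> j)" by blast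
  have valid: "\<exists>j<k. v0 < vs ! \<sigma> j" "\<exists>j<k. \<not> v0 < vs ! \<sigma> j"
    unfolding ex_orient_iff[of "\<lambda>i. v0 < vs ! i"] ex_orient_iff[of "\<lambda>i. \<not> v0 < vs ! i"]
    using below above less_asym by blast+
  show False
    by (rule leading_choice_tree_no_improvement[OF LT valid differs]) simp
qed

end

context wheel
begin

lemma leading_tree_choice_form:
  obtains \<sigma> c where "wheel_orientation v0 vs \<sigma>" "leading_tree v0 vs = choice_tree \<sigma> c"
proof -
  have "coupled_tree v0 vs (leading_tree v0 vs)" using leading_tree_spec by blast
  from coupled_tree_is_choice_tree[OF this] show thesis using that by blast
qed

lemma val_leading_tree_hub_if_min:
  assumes "v0 = Min V"
  shows "val (leading_tree v0 vs) v0 = k - 1"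
proof -
  obtain \<sigma> c where "wheel_orientation v0 vs \<sigma>" and LT: "leading_tree v0 vs = choice_tree \<sigma> c"
    by (rule leading_tree_choice_form)
  interpret wheel_orientation v0 vs \<sigma> by fact
  show ?thesis
    using assms LT val_choice_tree_hub leading_choice_tree_spokes_if_hub_min hub_eq_Min_iff
    by simp
qed

lemma val_leading_tree_hub_if_max:
  assumes "v0 = Max V"
  shows "val (leading_tree v0 vs) v0 = 1"
proof -
  obtain \<sigma> c where "wheel_orientation v0 vs \<sigma>" and LT: "leading_tree v0 vs = choice_tree \<sigma> c"
    by (rule leading_tree_choice_form)
  interpret wheel_orientation v0 vs \<sigma> by fact
  show ?thesis
    using assms LT val_choice_tree_hub leading_choice_tree_spokes_if_hub_max hub_eq_Max_iff
    by simp
qed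

lemma val_leading_tree_if_hub_inner:
  assumes "v0 \<noteq> Min V" "v0 \<noteq> Max V"
  shows "val (leading_tree v0 vs) v0 = card {v \<in> V. v0 \<le> v} - 1"
    and "i < k \<Longrightarrow> val (leading_tree v0 vs) (vs ! i) = (if v0 < vs ! i then 1 else 2)"
proof -
  have below: "\<exists>j<k. vs ! j < v0" and above: "\<exists>j<k. v0 < vs ! j"
    using assms nth_ne_hub hub_eq_Min_iff hub_eq_Max_iff by (meson linorder_neqE_nat)+
  obtain \<sigma> c where "wheel_orientation v0 vs \<sigma>" and LT: "leading_tree v0 vs = choice_tree \<sigma> c"
    by (rule leading_tree_choice_form)
  interpret wheel_orientation v0 vs \<sigma> by fact
  have order: "\<forall>j<k. c j \<longleftrightarrow> v0 < vs ! \<sigma> j"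
    by (rule leading_choice_tree_eq_order[OF LT below above])
  have "{j. j < k \<and> c j} = {j. j < k \<and> v0 < vs ! \<sigma> j}" using order by blast
  then show "val (leading_tree v0 vs) v0 = card {v \<in> V. v0 \<le> v} - 1"
    using LT val_choice_tree_hub card_orient_preimage card_vertices_above_hub by simp
  assume "i < k"
  then obtain p where "p < k" "\<sigma> p = i" using orient_surj by (metis imageE lessThan_iff)
  then show "val (leading_tree v0 vs) (vs ! i) = (if v0 < vs ! i then 1 else 2)"
    using LT val_choice_tree_nth[OF \<open>i < k\<close>] order by simp
qed

end

theorem proposition4p1:
  fixes n v0 :: nat and vs :: "nat list"
  assumes "is_wheel n v0 vs"
  defines "V \<equiv> wheel_vertices v0 vs"
  defines "k \<equiv> length vs"
  defines "LT \<equiv> leading_tree v0 vs"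
  shows "(v0 = Min V \<longrightarrow> val LT v0 = k - 1)
       \<and> (v0 = Max V \<longrightarrow> val LT v0 = 1)
       \<and> (v0 \<noteq> Min V \<and> v0 \<noteq> Max V \<longrightarrow>
            (\<forall>i < k. (vs ! i > v0 \<longrightarrow> val LT (vs ! i) = 1)
                   \<and> (vs ! i < v0 \<longrightarrow> val LT (vs ! i) = 2))
          \<and> (\<forall>r. r = card {v \<in> V. v0 \<le> v} \<longrightarrow> 2 \<le> r \<and> r \<le> k \<and> val LT v0 = r - 1))"
proof -
  have W: "wheel v0 vs"
    using assms(1) unfolding is_wheel_def wheel_def by simp
  note wheel.val_leading_tree_hub_if_min[OF W] wheel.val_leading_tree_hub_if_max[OF W]
    wheel.val_leading_tree_if_hub_inner[OF W] wheel.card_vertices_above_inner_hub[OF W]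
  then show ?thesis unfolding V_def k_def LT_def by auto
qed

end
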